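(* Let $n$ be a positive integer and $p$ an odd prime. Let $S \subseteq \mathbb{Z}_n$ with $0\notin S$, $S=-S$, $|S| = p$, such that the circulant graph $\mathrm{Cay}(\mathbb{Z}_n,S)$ is connected. Then $\mathrm{Cay}(\mathbb{Z}_n,S)$ admits a total perfect code if and only if $p$ divides $n$ and $s \not\equiv s' \pmod p$ for all distinct $s,s'\in S$.
   Context: $\mathbb{Z}_n$ is the additive group of integers modulo $n$; elements are identified with integers in $\{0,1,\dots,n-1\}$ when reducing modulo $p$. For an inverse-closed subset $S$ of $\mathbb{Z}_n$ not containing $0$, the circulant graph $\mathrm{Cay}(\mathbb{Z}_n,S)$ has vertex set $\mathbb{Z}_n$, with $u,v$ adjacent iff $v-u\in S$; its degree is $|S|$. A total perfect code in a graph $\Gamma=(V,E)$ is a subset $C\subseteq V$ such that every vertex of $V$ has exactly one neighbour in $C$. *)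

theory Defs
  imports Main "HOL-Computational_Algebra.Primes"
begin

text \<open>Z_n is modelled by the integers {0..<n}; S is a subset of {0..<n}.\<close>

definition circ_adj :: "int \<Rightarrow> int set \<Rightarrow> int \<Rightarrow> int \<Rightarrow> bool" where
  "circ_adj n S u v \<longleftrightarrow> u \<in> {0..<n} \<and> v \<in> {0..<n} \<and> (v - u) mod n \<in> S"

definition connection_set :: "int \<Rightarrow> int set \<Rightarrow> bool" where
  "connection_set n S \<longleftrightarrow> S \<subseteq> {0..<n} \<and> 0 \<notin> S \<and> (\<forall>s\<in>S. (- s) mod n \<in> S)"

definition circulant_connected :: "int \<Rightarrow> int set \<Rightarrow> bool" where
  "circulant_connected n S \<longleftrightarrow>
     (\<forall>u\<in>{0..<n}. \<forall>v\<in>{0..<n}. (circ_adj n S)\<^sup>*\<^sup>* u v)"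

definition total_perfect_code :: "int \<Rightarrow> int set \<Rightarrow> int set \<Rightarrow> bool" where
  "total_perfect_code n S C \<longleftrightarrow> C \<subseteq> {0..<n} \<and>
     (\<forall>v\<in>{0..<n}. card {c \<in> C. circ_adj n S v c} = 1)"

end

theory Submission
  imports Defs "HOL-Computational_Algebra.Polynomial"
begin

text \<open>
  If \<open>C\<close> is a total perfect code, then \<open>S\<close> and \<open>C\<close> tile \<open>\<int>/n\<close>: every residue is uniquely
  \<open>s + c\<close>. In the group ring \<open>\<int>[\<int>/n]\<close> this reads \<open>S C = J\<close> (the all-one element), so
  \<open>S^p C = p^(p-1) J \<equiv> 0\<close>, while the Frobenius congruence \<open>S^p \<equiv> S(x^p)\<close> (mod \<open>p\<close>) makes
  the coefficient of \<open>x^z\<close> count the representations \<open>z = p s + c\<close>. Hence each \<open>z\<close> has either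
  none or all \<open>p\<close> of them, so \<open>C\<close> is invariant under the translations \<open>p (s - s')\<close>. The \<open>t\<close>
  with \<open>C + p t = C\<close> form a subgroup containing \<open>S - S\<close>, hence, by connectedness and \<open>S = -S\<close>,
  containing \<open>2\<close>; as \<open>p\<close> is odd it then contains \<open>e\<close> whenever \<open>s - s' = p e\<close>, and the codewords
  \<open>c\<close> and \<open>c + s - s'\<close> would both be neighbours of \<open>c - s'\<close>. Counting edges gives \<open>n = p |C|\<close>.
  Conversely, if \<open>S\<close> is a transversal of \<open>\<int>/p\<close> and \<open>p\<close> divides \<open>n\<close>, the multiples of \<open>p\<close>
  form a total perfect code.
\<close>

lemma prime_dvd_power_add_minus_powers:
  fixes x y :: "'a::comm_ring_1"
  assumes "prime P"
  shows "of_nat P dvd (x + y) ^ P - x ^ P - y ^ P"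
proof -
  have P: "P > 1" using assms prime_gt_1_nat by blast
  define mid where "mid = (\<Sum>k\<in>{1..<P}. of_nat (P choose k) * x ^ k * y ^ (P - k) :: 'a)"
  have "{..P} = insert 0 (insert P {1..<P})" using P by auto
  then have "(x + y) ^ P = y ^ P + (x ^ P + mid)"
    using P by (simp add: binomial_ring mid_def)
  moreover have "of_nat P dvd mid"
    unfolding mid_def
  proof (intro dvd_sum dvd_mult2)
    fix k assume "k \<in> {1..<P}"
    then have "P dvd P choose k" using assms by (intro dvd_choose_prime) auto
    then show "of_nat P dvd (of_nat (P choose k) :: 'a)" by (metis dvd_def of_nat_mult)
  qed
  ultimately show ?thesis by (simp add: algebra_simps)
qed

lemma prime_dvd_power_sum_minus_sum_powers:
  fixes f :: "'b \<Rightarrow> 'a::comm_ring_1"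
  assumes "prime P"
  shows "of_nat P dvd (\<Sum>a\<in>A. f a) ^ P - (\<Sum>a\<in>A. f a ^ P)"
proof (induction A rule: infinite_finite_induct)
  case (insert a A)
  let ?s = "\<Sum>a\<in>A. f a" and ?t = "\<Sum>a\<in>A. f a ^ P"
  have split: "(\<Sum>a\<in>insert a A. f a) ^ P - (\<Sum>a\<in>insert a A. f a ^ P)
      = ((f a + ?s) ^ P - f a ^ P - ?s ^ P) + (?s ^ P - ?t)"
    using insert.hyps by (simp add: algebra_simps)
  show ?case
    unfolding split by (rule dvd_add[OF prime_dvd_power_add_minus_powers[OF assms] insert.IH])
qed (use prime_gt_0_nat[OF assms] in \<open>simp_all add: power_0_left\<close>)

lemma mod_add_eq_iff_mod_eq_diff:
  fixes a b n z :: int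
  assumes "z \<in> {0..<n}"
  shows "(a + b) mod n = z \<longleftrightarrow> b mod n = (z - a) mod n"
proof -
  have "(a + b) mod n = z \<longleftrightarrow> (a + b) mod n = z mod n" using assms by simp
  also have "\<dots> \<longleftrightarrow> b mod n = (z - a) mod n" by (simp add: mod_eq_dvd_iff algebra_simps)
  finally show ?thesis .
qed

text \<open>\<open>cyclic_coeff n f z\<close> is the coefficient of \<open>x^z\<close> in the image of \<open>f\<close> in
  \<open>\<int>[x]/(x^n - 1) = \<int>[\<int>/n]\<close>.\<close>

definition cyclic_coeff :: "int \<Rightarrow> int poly \<Rightarrow> int \<Rightarrow> int" where
  "cyclic_coeff n f z = (\<Sum>i\<le>degree f. if int i mod n = z then coeff f i else 0)"

lemma cyclic_coeff_altdef:
  assumes "degree f \<le> K"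
  shows "cyclic_coeff n f z = (\<Sum>i\<le>K. if int i mod n = z then coeff f i else 0)"
  unfolding cyclic_coeff_def
  by (rule sum.mono_neutral_left) (use assms in \<open>auto simp: coeff_eq_0\<close>)

lemma cyclic_coeff_0 [simp]: "cyclic_coeff n 0 z = 0"
  unfolding cyclic_coeff_def by (simp only: coeff_0 if_cancel sum.neutral_const)

lemma cyclic_coeff_add: "cyclic_coeff n (f + g) z = cyclic_coeff n f z + cyclic_coeff n g z"
proof -
  define K where "K = max (degree f) (degree g)"
  have "degree (f + g) \<le> K" unfolding K_def by (rule degree_add_le) auto
  then show ?thesis
    by (simp add: cyclic_coeff_altdef[of _ K] K_def sum.distrib[symmetric] if_distrib)
      (rule sum.cong, auto)
qed

lemma cyclic_coeff_sum: "cyclic_coeff n (\<Sum>i\<in>I. f i) z = (\<Sum>i\<in>I. cyclic_coeff n (f i) z)"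
  by (induction I rule: infinite_finite_induct) (simp_all add: cyclic_coeff_add)

lemma cyclic_coeff_monom: "cyclic_coeff n (monom c k) z = (if int k mod n = z then c else 0)"
proof -
  have "cyclic_coeff n (monom c k) z = (\<Sum>i\<le>k. if i = k then (if int k mod n = z then c else 0) else 0)"
    by (subst cyclic_coeff_altdef[OF degree_monom_le]) (rule sum.cong, auto simp: coeff_monom)
  then show ?thesis by simp
qed

lemma const_dvd_cyclic_coeff: "[:c:] dvd f \<Longrightarrow> c dvd cyclic_coeff n f z"
  by (simp add: cyclic_coeff_def const_poly_dvd_iff dvd_sum)

lemma cyclic_coeff_mult:
  assumes "z \<in> {0..<n}"
  shows "cyclic_coeff n (f * g) z = (\<Sum>i\<le>degree f. coeff f i * cyclic_coeff n g ((z - int i) mod n))"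
proof -
  have "f * g = (\<Sum>i\<le>degree f. \<Sum>j\<le>degree g. monom (coeff f i * coeff g j) (i + j))"
    by (subst (1 2) poly_as_sum_of_monoms[symmetric]) (simp add: sum_product mult_monom)
  then have "cyclic_coeff n (f * g) z = (\<Sum>i\<le>degree f. \<Sum>j\<le>degree g.
      if (int i + int j) mod n = z then coeff f i * coeff g j else 0)"
    by (simp add: cyclic_coeff_sum cyclic_coeff_monom)
  also have "\<dots> = (\<Sum>i\<le>degree f. coeff f i * cyclic_coeff n g ((z - int i) mod n))"
    unfolding cyclic_coeff_def sum_distrib_left
    by (intro sum.cong refl) (simp add: mod_add_eq_iff_mod_eq_diff[OF assms])
  finally show ?thesis .
qed

lemma cyclic_coeff_mult_uniform:
  assumes "z \<in> {0..<n}" and "\<And>w. w \<in> {0..<n} \<Longrightarrow> cyclic_coeff n g w = 1"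
  shows "cyclic_coeff n (f * g) z = poly f 1"
proof -
  have "n > 0" using assms(1) by simp
  then show ?thesis
    using assms by (simp add: cyclic_coeff_mult poly_altdef)
qed

definition set_poly :: "nat \<Rightarrow> int set \<Rightarrow> int poly" where
  "set_poly k A = (\<Sum>a\<in>A. monom 1 (k * nat a))"

lemma poly_set_poly_1: "finite A \<Longrightarrow> poly (set_poly k A) 1 = int (card A)"
  by (simp add: set_poly_def poly_sum poly_monom)

lemma prime_dvd_set_poly_power: "prime P \<Longrightarrow> [:int P:] dvd set_poly 1 A ^ P - set_poly P A"
  using prime_dvd_power_sum_minus_sum_powers[of P "\<lambda>a. monom 1 (nat a)" A]
  by (simp add: set_poly_def monom_power mult.commute of_nat_poly)

lemma cyclic_coeff_set_poly_mult:
  assumes S: "S \<subseteq> {0..<n}" and C: "C \<subseteq> {0..<n}" and z: "z \<in> {0..<n}"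
  shows "cyclic_coeff n (set_poly k S * set_poly 1 C) z = int (card {s\<in>S. (z - int k * s) mod n \<in> C})"
proof -
  have fin: "finite S" "finite C" using S C finite_subset by blast+
  have "cyclic_coeff n (set_poly k S * set_poly 1 C) z
      = (\<Sum>s\<in>S. \<Sum>c\<in>C. if (int k * s + c) mod n = z then 1 else 0)"
    using S C by (simp add: set_poly_def sum_product mult_monom cyclic_coeff_sum cyclic_coeff_monom
        subset_iff cong: sum.cong)
  also have "\<dots> = (\<Sum>s\<in>S. \<Sum>c\<in>C. if c = (z - int k * s) mod n then 1 else 0)"
    using C by (intro sum.cong refl) (auto simp: mod_add_eq_iff_mod_eq_diff[OF z])
  also have "\<dots> = int (card {s\<in>S. (z - int k * s) mod n \<in> C})"
    using fin by (simp add: sum.delta' sum.If_cases Int_def)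
  finally show ?thesis .
qed

lemma connection_set_nonempty_gt_1:
  assumes "connection_set n S" and "S \<noteq> {}"
  shows "n > 1"
proof -
  obtain s where "s \<in> S" using assms(2) by blast
  with assms(1) have "s \<in> {0..<n}" "s \<noteq> 0" by (auto simp: connection_set_def)
  then show ?thesis by simp
qed

lemma card_reflect_mod:
  fixes n c :: int
  assumes "A \<subseteq> {0..<n}"
  shows "card {v\<in>{0..<n}. (c - v) mod n \<in> A} = card A"
proof (rule bij_betw_same_card, rule bij_betw_byWitness[of _ "\<lambda>a. (c - a) mod n"])
  show "\<forall>v\<in>{v\<in>{0..<n}. (c - v) mod n \<in> A}. (c - (c - v) mod n) mod n = v"
    by (auto simp: mod_diff_right_eq)
  show "\<forall>a\<in>A. (c - (c - a) mod n) mod n = a"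
    using assms by (auto simp: mod_diff_right_eq)
  show "(\<lambda>a. (c - a) mod n) ` A \<subseteq> {v\<in>{0..<n}. (c - v) mod n \<in> A}"
    using assms by (force simp: mod_diff_right_eq)
qed auto

lemma total_perfect_code_neighbours:
  assumes "total_perfect_code n S C" and "v \<in> {0..<n}"
  shows "card {c\<in>C. (c - v) mod n \<in> S} = 1"
proof -
  have "{c\<in>C. (c - v) mod n \<in> S} = {c\<in>C. circ_adj n S v c}"
    using assms by (auto simp: total_perfect_code_def circ_adj_def)
  with assms show ?thesis by (simp add: total_perfect_code_def)
qed

lemma total_perfect_code_tiling:
  assumes cs: "connection_set n S" and tpc: "total_perfect_code n S C" and z: "z \<in> {0..<n}"
  shows "card {s\<in>S. (z - s) mod n \<in> C} = 1"
proof -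
  have S: "S \<subseteq> {0..<n}" and neg: "\<And>s. s \<in> S \<Longrightarrow> (- s) mod n \<in> S"
    using cs by (auto simp: connection_set_def)
  have C: "C \<subseteq> {0..<n}" using tpc by (simp add: total_perfect_code_def)
  have "card {s\<in>S. (z - s) mod n \<in> C} = card {c\<in>C. (c - z) mod n \<in> S}"
  proof (rule bij_betw_same_card, rule bij_betw_byWitness[of _ "\<lambda>c. (z - c) mod n"])
    show "\<forall>s\<in>{s\<in>S. (z - s) mod n \<in> C}. (z - (z - s) mod n) mod n = s"
      using S by (auto simp: mod_diff_right_eq)
    show "\<forall>c\<in>{c\<in>C. (c - z) mod n \<in> S}. (z - (z - c) mod n) mod n = c"
      using C by (auto simp: mod_diff_right_eq)
    show "(\<lambda>s. (z - s) mod n) ` {s\<in>S. (z - s) mod n \<in> C} \<subseteq> {c\<in>C. (c - z) mod n \<in> S}"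
      using neg by (auto simp: mod_diff_left_eq)
    have "(- ((c - z) mod n)) mod n = (z - c) mod n" for c
      by (metis minus_diff_eq mod_minus_eq)
    then show "(\<lambda>c. (z - c) mod n) ` {c\<in>C. (c - z) mod n \<in> S} \<subseteq> {s\<in>S. (z - s) mod n \<in> C}"
      using neg C by (force simp: mod_diff_right_eq)
  qed
  also have "\<dots> = 1" by (rule total_perfect_code_neighbours[OF tpc z])
  finally show ?thesis .
qed

lemma total_perfect_code_card:
  assumes cs: "connection_set n S" and tpc: "total_perfect_code n S C"
  shows "nat n = card C * card S"
proof -
  have S: "S \<subseteq> {0..<n}" using cs by (simp add: connection_set_def)
  have C: "C \<subseteq> {0..<n}" using tpc by (simp add: total_perfect_code_def)
  have "nat n = (\<Sum>v\<in>{0..<n}. card {c\<in>C. (c - v) mod n \<in> S})"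
    using total_perfect_code_neighbours[OF tpc] by simp
  also have "\<dots> = card S * card C"
    using card_reflect_mod[OF S] C finite_subset by (intro sum_multicount) auto
  finally show ?thesis by simp
qed

lemma total_perfect_code_dilated_count_cong:
  assumes "prime P" and cs: "connection_set n S" and tpc: "total_perfect_code n S C"
    and z: "z \<in> {0..<n}"
  shows "int P dvd int (card {s\<in>S. (z - int P * s) mod n \<in> C}) - int (card S) ^ (P - 1)"
proof -
  have S: "S \<subseteq> {0..<n}" using cs by (simp add: connection_set_def)
  have C: "C \<subseteq> {0..<n}" using tpc by (simp add: total_perfect_code_def)
  have "P > 0" using assms(1) prime_gt_0_nat by blast
  define D where "D = set_poly 1 S ^ P - set_poly P S"
  have uniform: "\<And>w. w \<in> {0..<n} \<Longrightarrow> cyclic_coeff n (set_poly 1 S * set_poly 1 C) w = 1"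
    using cyclic_coeff_set_poly_mult[OF S C] total_perfect_code_tiling[OF cs tpc] by simp
  have factor: "set_poly 1 S ^ P * set_poly 1 C = set_poly 1 S ^ (P - 1) * (set_poly 1 S * set_poly 1 C)"
    using \<open>P > 0\<close> by (metis mult.assoc power_minus_mult)
  have "cyclic_coeff n (set_poly 1 S ^ P * set_poly 1 C) z = poly (set_poly 1 S ^ (P - 1)) 1"
    unfolding factor by (rule cyclic_coeff_mult_uniform[OF z uniform])
  also have "\<dots> = int (card S) ^ (P - 1)"
    using poly_set_poly_1[OF finite_subset[OF S]] by (simp add: poly_power)
  finally have total: "cyclic_coeff n (set_poly 1 S ^ P * set_poly 1 C) z = int (card S) ^ (P - 1)" .
  have "set_poly 1 S ^ P * set_poly 1 C = D * set_poly 1 C + set_poly P S * set_poly 1 C"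
    by (simp add: D_def left_diff_distrib)
  then have decomp: "cyclic_coeff n (set_poly 1 S ^ P * set_poly 1 C) z
      = cyclic_coeff n (D * set_poly 1 C) z + int (card {s\<in>S. (z - int P * s) mod n \<in> C})"
    by (simp only: cyclic_coeff_add cyclic_coeff_set_poly_mult[OF S C z])
  have "int P dvd cyclic_coeff n (D * set_poly 1 C) z"
    unfolding D_def using prime_dvd_set_poly_power[OF assms(1)]
    by (intro const_dvd_cyclic_coeff dvd_mult2)
  moreover have "int (card {s\<in>S. (z - int P * s) mod n \<in> C}) - int (card S) ^ (P - 1)
      = - cyclic_coeff n (D * set_poly 1 C) z"
    using total decomp by linarith
  ultimately show ?thesis by simp
qed

lemma total_perfect_code_dilated_shift:
  fixes p :: int
  assumes p: "prime p" "card S = nat p" and cs: "connection_set n S"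
    and tpc: "total_perfect_code n S C" and "c \<in> C" "s \<in> S" "s' \<in> S"
  shows "(c + p * (s - s')) mod n \<in> C"
proof -
  have S: "S \<subseteq> {0..<n}" using cs by (simp add: connection_set_def)
  have "finite S" using S finite_subset by blast
  have "c \<in> {0..<n}" using tpc \<open>c \<in> C\<close> by (auto simp: total_perfect_code_def)
  define P where "P = nat p"
  have P: "p = int P" "prime P"
    using p(1) prime_gt_0_int[OF p(1)] by (simp_all add: P_def prime_nat_iff_prime)
  define z where "z = (c + p * s) mod n"
  have z: "z \<in> {0..<n}" using \<open>c \<in> {0..<n}\<close> by (simp add: z_def)
  define X where "X = {t\<in>S. (z - p * t) mod n \<in> C}"
  have "(z - p * s) mod n = c" using \<open>c \<in> {0..<n}\<close> by (simp add: z_def mod_diff_left_eq)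
  then have "s \<in> X" using \<open>c \<in> C\<close> \<open>s \<in> S\<close> by (simp add: X_def)
  have "X \<subseteq> S" by (auto simp: X_def)
  have "p dvd int (card X) - p ^ (P - 1)"
    using total_perfect_code_dilated_count_cong[OF P(2) cs tpc z] P p(2) by (simp add: X_def)
  moreover have "p dvd p ^ (P - 1)" using prime_ge_2_nat[OF P(2)] by (intro dvd_power) simp
  ultimately have "p dvd int (card X)" by (metis diff_add_cancel dvd_add)
  then have "P dvd card X" using P(1) by simp
  moreover have "card X > 0"
    using \<open>s \<in> X\<close> \<open>X \<subseteq> S\<close> \<open>finite S\<close> by (auto simp: card_gt_0_iff dest: finite_subset)
  ultimately have "card S \<le> card X" using p(2) P(1) by (simp add: dvd_imp_le)
  then have "X = S" using \<open>X \<subseteq> S\<close> \<open>finite S\<close> by (metis card_seteq)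
  then have "(z - p * s') mod n \<in> C" using \<open>s' \<in> S\<close> by (auto simp: X_def)
  moreover have "(z - p * s') mod n = (c + p * (s - s')) mod n"
    by (simp add: z_def mod_diff_left_eq algebra_simps)
  ultimately show ?thesis by simp
qed

lemma int_mult_mem_of_add_closed:
  fixes G :: "int set"
  assumes add: "\<And>a b. a \<in> G \<Longrightarrow> b \<in> G \<Longrightarrow> a + b \<in> G"
    and "n > 0" and period: "\<And>k. n * k \<in> G" and "t \<in> G"
  shows "k * t \<in> G"
proof -
  have nat_mult: "int m * t \<in> G" for m
    by (induction m) (use period[of 0] add \<open>t \<in> G\<close> in \<open>simp_all add: distrib_right\<close>)
  show ?thesis
  proof (cases "k \<ge> 0")
    case True
    then show ?thesis using nat_mult[of "nat k"] by simp
  next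
    case False
    \<comment> \<open>\<open>k t = (-k) (n - 1) t + n (k t)\<close> with a nonnegative first coefficient\<close>
    then have "- k * (n - 1) \<ge> 0" using \<open>n > 0\<close> by (simp add: mult_nonpos_nonneg)
    then have "int (nat (- k * (n - 1))) * t + n * (k * t) = k * t" by (simp add: algebra_simps)
    then show ?thesis using add[OF nat_mult period] by metis
  qed
qed

lemma circulant_connected_two_mem:
  fixes G :: "int set"
  assumes cs: "connection_set n S" and conn: "circulant_connected n S" and "S \<noteq> {}"
    and add: "\<And>a b. a \<in> G \<Longrightarrow> b \<in> G \<Longrightarrow> a + b \<in> G"
    and period: "\<And>k. n * k \<in> G"
    and diff: "\<And>s s'. s \<in> S \<Longrightarrow> s' \<in> S \<Longrightarrow> s - s' \<in> G"
  shows "2 \<in> G"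
proof -
  have "n > 1" using connection_set_nonempty_gt_1[OF cs \<open>S \<noteq> {}\<close>] .
  obtain s0 where "s0 \<in> S" using \<open>S \<noteq> {}\<close> by blast
  have mult: "\<And>t k. t \<in> G \<Longrightarrow> k * t \<in> G"
    using int_mult_mem_of_add_closed[OF add _ period] \<open>n > 1\<close> by simp
  have "(- s0) mod n \<in> S" using cs \<open>s0 \<in> S\<close> by (simp add: connection_set_def)
  moreover have "(s0 - (- s0) mod n) + n * (- ((- s0) div n)) = 2 * s0"
    using div_mult_mod_eq[of "- s0" n] by (simp add: algebra_simps)
  ultimately have "2 * s0 \<in> G" using add[OF diff[OF \<open>s0 \<in> S\<close>] period] by metis
  \<comment> \<open>modulo \<open>G\<close>, every step along an edge adds \<open>s0\<close>\<close>
  have "\<exists>L. v - L * s0 \<in> G" if "(circ_adj n S)\<^sup>*\<^sup>* 0 v" for v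
    using that
  proof (induction rule: rtranclp_induct)
    case base
    show ?case using period[of 0] by (intro exI[of _ 0]) simp
  next
    case (step y z)
    then obtain L where L: "y - L * s0 \<in> G" by blast
    have "(z - y) mod n \<in> S" using step(2) by (simp add: circ_adj_def)
    moreover have "(y - L * s0) + ((z - y) mod n - s0) + n * ((z - y) div n) = z - (L + 1) * s0"
      using div_mult_mod_eq[of "z - y" n] by (simp add: algebra_simps)
    ultimately have "z - (L + 1) * s0 \<in> G"
      using add[OF add[OF L diff[OF _ \<open>s0 \<in> S\<close>]] period] by metis
    then show ?case by blast
  qed
  moreover have "(circ_adj n S)\<^sup>*\<^sup>* 0 1" using conn \<open>n > 1\<close> by (simp add: circulant_connected_def)
  ultimately obtain L where "1 - L * s0 \<in> G" by blast
  moreover have "2 * (1 - L * s0) + L * (2 * s0) = 2" by (simp add: algebra_simps)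
  ultimately show ?thesis using add[OF mult mult] \<open>2 * s0 \<in> G\<close> by metis
qed

lemma total_perfect_code_shift_not_mem:
  assumes cs: "connection_set n S" and tpc: "total_perfect_code n S C"
    and "c \<in> C" "s \<in> S" "s' \<in> S" "s \<noteq> s'"
  shows "(c + (s - s')) mod n \<notin> C"
proof
  assume c': "(c + (s - s')) mod n \<in> C"
  have S: "S \<subseteq> {0..<n}" using cs by (simp add: connection_set_def)
  have "c \<in> {0..<n}" using tpc \<open>c \<in> C\<close> by (auto simp: total_perfect_code_def)
  \<comment> \<open>both codewords would be neighbours of \<open>c - s'\<close>\<close>
  define v where "v = (c - s') mod n"
  have v: "v \<in> {0..<n}" using \<open>c \<in> {0..<n}\<close> by (simp add: v_def)
  have "(c - v) mod n = s'" using \<open>s' \<in> S\<close> S by (auto simp: v_def mod_diff_right_eq)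
  moreover have "((c + (s - s')) mod n - v) mod n = s"
    using \<open>s \<in> S\<close> S unfolding v_def mod_diff_eq by auto
  ultimately have "{c, (c + (s - s')) mod n} \<subseteq> {x\<in>C. (x - v) mod n \<in> S}"
    using \<open>c \<in> C\<close> c' \<open>s \<in> S\<close> \<open>s' \<in> S\<close> by auto
  moreover have "c \<noteq> (c + (s - s')) mod n"
    using \<open>(c - v) mod n = s'\<close> \<open>((c + (s - s')) mod n - v) mod n = s\<close> \<open>s \<noteq> s'\<close> by auto
  moreover have "finite C"
    using tpc finite_subset[of C "{0..<n}"] by (simp add: total_perfect_code_def)
  ultimately have "card {c, (c + (s - s')) mod n} \<le> card {x\<in>C. (x - v) mod n \<in> S}"
    by (intro card_mono) auto
  then show False
    using total_perfect_code_neighbours[OF tpc v] \<open>c \<noteq> (c + (s - s')) mod n\<close> by simp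
qed

lemma total_perfect_code_residues_distinct:
  fixes p :: int
  assumes p: "prime p" "odd p" "card S = nat p"
    and cs: "connection_set n S" and conn: "circulant_connected n S"
    and tpc: "total_perfect_code n S C"
    and "s \<in> S" "s' \<in> S" "s \<noteq> s'"
  shows "s mod p \<noteq> s' mod p"
proof
  assume "s mod p = s' mod p"
  then obtain e where e: "s - s' = p * e" by (metis mod_eq_dvd_iff dvdE)
  have "n > 1" using connection_set_nonempty_gt_1[OF cs] \<open>s \<in> S\<close> by blast
  have C: "C \<subseteq> {0..<n}" using tpc by (simp add: total_perfect_code_def)
  define G where "G = {t. \<forall>c\<in>C. (c + p * t) mod n \<in> C}"
  have add: "a + b \<in> G" if "a \<in> G" "b \<in> G" for a b
  proof -
    have "(c + p * (a + b)) mod n = ((c + p * a) mod n + p * b) mod n" for c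
      unfolding mod_add_left_eq by (simp add: algebra_simps)
    then show ?thesis using that by (simp add: G_def)
  qed
  have period: "n * k \<in> G" for k
  proof -
    have "(c + p * (n * k)) mod n = c" if "c \<in> C" for c
    proof -
      have "c \<in> {0..<n}" using that C by blast
      then have "(c + (p * k) * n) mod n = c" by simp
      then show ?thesis by (simp add: algebra_simps)
    qed
    then show ?thesis by (simp add: G_def)
  qed
  have diff: "s1 - s2 \<in> G" if "s1 \<in> S" "s2 \<in> S" for s1 s2
    using total_perfect_code_dilated_shift[OF p(1,3) cs tpc _ that] by (simp add: G_def)
  then have "2 \<in> G"
    using circulant_connected_two_mem[OF cs conn _ add period] \<open>s \<in> S\<close> by blast
  \<comment> \<open>\<open>p\<close> is odd, so \<open>e = (s - s') - (p - 1) e\<close> lies in the subgroup generated by \<open>s - s'\<close> and \<open>2\<close>\<close>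
  moreover have "(s - s') + (- ((p - 1) div 2) * e) * 2 = e"
    using \<open>odd p\<close> e by (auto elim!: oddE simp: algebra_simps)
  moreover have "k * 2 \<in> G" for k
    using int_mult_mem_of_add_closed[OF add _ period \<open>2 \<in> G\<close>] \<open>n > 1\<close> by simp
  ultimately have "e \<in> G" using add[OF diff[OF \<open>s \<in> S\<close> \<open>s' \<in> S\<close>]] by metis
  have "card {c\<in>C. (c - 0) mod n \<in> S} = 1"
    using total_perfect_code_neighbours[OF tpc, of 0] \<open>n > 1\<close> by simp
  then obtain c where "c \<in> C" by (metis (no_types, lifting) card.empty empty_Collect_eq zero_neq_one)
  then have "(c + (s - s')) mod n \<in> C" using \<open>e \<in> G\<close> e by (simp add: G_def)
  then show False
    using total_perfect_code_shift_not_mem[OF cs tpc \<open>c \<in> C\<close> \<open>s \<in> S\<close> \<open>s' \<in> S\<close> \<open>s \<noteq> s'\<close>] by blast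
qed

lemma multiples_total_perfect_code:
  fixes n p :: int
  assumes "p > 0" "p dvd n" and S: "S \<subseteq> {0..<n}" "card S = nat p"
    and inj: "inj_on (\<lambda>s. s mod p) S"
  shows "total_perfect_code n S {c\<in>{0..<n}. p dvd c}"
proof -
  have residues: "(\<lambda>s. s mod p) ` S = {0..<p}"
    using \<open>p > 0\<close> S card_image[OF inj] by (intro card_subset_eq) auto
  have mod_p: "(x mod n) mod p = x mod p" for x
    using \<open>p dvd n\<close> by (rule mod_mod_cancel)
  have unique: "{c\<in>{c\<in>{0..<n}. p dvd c}. circ_adj n S v c} = {(v + s) mod n}"
    if "v \<in> {0..<n}" "s \<in> S" "s mod p = (- v) mod p" for v s
  proof (intro equalityI subsetI)
    fix c assume "c \<in> {c\<in>{c\<in>{0..<n}. p dvd c}. circ_adj n S v c}"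
    then have c: "c \<in> {0..<n}" "p dvd c" "(c - v) mod n \<in> S" by (auto simp: circ_adj_def)
    have "((c - v) mod n) mod p = (c mod p - v) mod p" by (simp only: mod_p mod_diff_left_eq)
    also have "\<dots> = s mod p" using c(2) that(3) by simp
    finally have "(c - v) mod n = s" using inj c(3) that(2) by (auto dest: inj_onD)
    then have "(v + s) mod n = (v + (c - v) mod n) mod n" by simp
    also have "\<dots> = c" using c(1) by (simp add: mod_add_right_eq)
    finally show "c \<in> {(v + s) mod n}" by simp
  next
    fix c assume "c \<in> {(v + s) mod n}"
    then have c: "c = (v + s) mod n" by simp
    have "c mod p = (v + s mod p) mod p" unfolding c mod_p by (simp only: mod_add_right_eq)
    also have "\<dots> = 0" unfolding that(3) by (simp only: mod_add_right_eq) simp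
    finally have "p dvd c" by presburger
    have "(c - v) mod n = (v + s - v) mod n" unfolding c by (simp only: mod_diff_left_eq)
    also have "\<dots> = s" using S that(2) by auto
    finally show "c \<in> {c\<in>{c\<in>{0..<n}. p dvd c}. circ_adj n S v c}"
      using \<open>p dvd c\<close> c that(1,2) by (simp add: circ_adj_def)
  qed
  have exists: "\<exists>s\<in>S. s mod p = (- v) mod p" for v
  proof -
    have "(- v) mod p \<in> (\<lambda>s. s mod p) ` S" using residues \<open>p > 0\<close> by simp
    then show ?thesis by (metis imageE)
  qed
  show ?thesis unfolding total_perfect_code_def
  proof (intro conjI ballI)
    fix v assume "v \<in> {0..<n}"
    moreover obtain s where "s \<in> S" "s mod p = (- v) mod p" using exists by blast
    ultimately show "card {c\<in>{c\<in>{0..<n}. p dvd c}. circ_adj n S v c} = 1"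
      by (simp only: unique) simp
  qed blast
qed

theorem theorem1p3:
  fixes n p :: int and S :: "int set"
  assumes "n > 0" and "prime p" and "odd p"
    and "connection_set n S"
    and "card S = nat p"
    and "circulant_connected n S"
  shows "(\<exists>C. total_perfect_code n S C) \<longleftrightarrow>
         (p dvd n \<and> (\<forall>s\<in>S. \<forall>s'\<in>S. s \<noteq> s' \<longrightarrow> s mod p \<noteq> s' mod p))"
proof
  assume "\<exists>C. total_perfect_code n S C"
  then obtain C where C: "total_perfect_code n S C" ..
  have "int (nat n) = int (card C) * int (nat p)"
    using total_perfect_code_card[OF assms(4) C] assms(5) by simp
  then have "n = int (card C) * p" using assms(1) prime_gt_0_int[OF assms(2)] by simp
  then show "p dvd n \<and> (\<forall>s\<in>S. \<forall>s'\<in>S. s \<noteq> s' \<longrightarrow> s mod p \<noteq> s' mod p)"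
    using total_perfect_code_residues_distinct[OF assms(2,3,5,4,6) C] by auto
next
  assume "p dvd n \<and> (\<forall>s\<in>S. \<forall>s'\<in>S. s \<noteq> s' \<longrightarrow> s mod p \<noteq> s' mod p)"
  then have "p dvd n" "inj_on (\<lambda>s. s mod p) S" by (auto simp: inj_on_def)
  then show "\<exists>C. total_perfect_code n S C"
    using multiples_total_perfect_code prime_gt_0_int[OF assms(2)] assms(4,5)
    by (auto simp: connection_set_def)
qed

end
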